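(* Let $A_S$ be an Artin group associated to a Coxeter matrix over a finite set $S$. Then $A_S$ is parabolic-retractable if and only if, for every $X\subseteq S$ and every $x\in X$, the subgroup $A_X$ admits a retraction onto $A_{X\setminus\{x\}}$.
   Context: A Coxeter matrix over a finite set $S$ is a matrix $M=(m_{s,t})_{s,t\in S}$ with entries in $\mathbb{N}\cup\{\infty\}$, $m_{s,s}=1$, and $m_{s,t}=m_{t,s}\ge 2$ for $s\neq t$. Write $\Pi(s,t,m)$ for the alternating word $sts\cdots$ of length $m$. The Artin group is $A_S=\langle S\mid \Pi(s,t,m_{s,t})=\Pi(t,s,m_{s,t})$ for $s\neq t$, $m_{s,t}\neq\infty\rangle$. For $X\subseteq S$, $A_X$ is the subgroup generated by $X$ ($A_\emptyset$ is trivial). A retraction of $G$ onto a subgroup $H$ is a homomorphism $\varphi:G\to H$ with $\varphi|_H=\mathrm{id}_H$. $A_S$ is parabolic-retractable if it admits a retraction onto $A_X$ for every $X\subseteq S$. *)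

theory Defs
  imports "HOL-Algebra.Generated_Groups" "HOL-Library.Extended_Nat"
begin

definition coxeter_matrix :: "('a \<Rightarrow> 'a \<Rightarrow> enat) \<Rightarrow> 'a set \<Rightarrow> bool" where
  "coxeter_matrix M S \<longleftrightarrow>
     (\<forall>s\<in>S. M s s = 1) \<and>
     (\<forall>s\<in>S. \<forall>t\<in>S. s \<noteq> t \<longrightarrow> M s t = M t s \<and> M s t \<ge> 2)"

text \<open>Words in the letters s (True) and s inverse (False).\<close>
type_synonym 'a aword = "('a \<times> bool) list"

definition words_over :: "'a set \<Rightarrow> 'a aword set" where
  "words_over S = {w. fst ` set w \<subseteq> S}"

fun alt_word :: "'a \<Rightarrow> 'a \<Rightarrow> nat \<Rightarrow> 'a aword" where
  "alt_word s t 0 = []"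
| "alt_word s t (Suc n) = (s, True) # alt_word t s n"

inductive artin_eq :: "('a \<Rightarrow> 'a \<Rightarrow> enat) \<Rightarrow> 'a set \<Rightarrow> 'a aword \<Rightarrow> 'a aword \<Rightarrow> bool"
  for M S where
  refl: "w \<in> words_over S \<Longrightarrow> artin_eq M S w w"
| sym: "artin_eq M S u v \<Longrightarrow> artin_eq M S v u"
| trans: "artin_eq M S u v \<Longrightarrow> artin_eq M S v w \<Longrightarrow> artin_eq M S u w"
| cancel: "u \<in> words_over S \<Longrightarrow> v \<in> words_over S \<Longrightarrow> s \<in> S \<Longrightarrow>
     artin_eq M S (u @ [(s, b), (s, \<not> b)] @ v) (u @ v)"
| braid: "u \<in> words_over S \<Longrightarrow> v \<in> words_over S \<Longrightarrow> s \<in> S \<Longrightarrow> t \<in> S \<Longrightarrow> s \<noteq> t \<Longrightarrow>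
     M s t = enat m \<Longrightarrow>
     artin_eq M S (u @ alt_word s t m @ v) (u @ alt_word t s m @ v)"

definition artin_rel :: "('a \<Rightarrow> 'a \<Rightarrow> enat) \<Rightarrow> 'a set \<Rightarrow> ('a aword \<times> 'a aword) set" where
  "artin_rel M S = {(u, v). artin_eq M S u v}"

definition artin_group :: "('a \<Rightarrow> 'a \<Rightarrow> enat) \<Rightarrow> 'a set \<Rightarrow> 'a aword set monoid" where
  "artin_group M S =
     \<lparr> carrier = words_over S // artin_rel M S,
       monoid.mult = (\<lambda>A B. artin_rel M S `` {(SOME a. a \<in> A) @ (SOME b. b \<in> B)}),
       one = artin_rel M S `` {[]} \<rparr>"

definition artin_gen :: "('a \<Rightarrow> 'a \<Rightarrow> enat) \<Rightarrow> 'a set \<Rightarrow> 'a \<Rightarrow> 'a aword set" where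
  "artin_gen M S s = artin_rel M S `` {[(s, True)]}"

definition artin_parabolic :: "('a \<Rightarrow> 'a \<Rightarrow> enat) \<Rightarrow> 'a set \<Rightarrow> 'a set \<Rightarrow> 'a aword set set" where
  "artin_parabolic M S X = generate (artin_group M S) (artin_gen M S ` X)"

definition retraction :: "('a, 'b) monoid_scheme \<Rightarrow> 'a set \<Rightarrow> ('a \<Rightarrow> 'a) \<Rightarrow> bool" where
  "retraction G H \<phi> \<longleftrightarrow> \<phi> \<in> hom G (G\<lparr>carrier := H\<rparr>) \<and> (\<forall>h\<in>H. \<phi> h = h)"

definition parabolic_retractable :: "('a \<Rightarrow> 'a \<Rightarrow> enat) \<Rightarrow> 'a set \<Rightarrow> bool" where
  "parabolic_retractable M S \<longleftrightarrow>
     (\<forall>X\<subseteq>S. \<exists>\<phi>. retraction (artin_group M S) (artin_parabolic M S X) \<phi>)"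

end

theory Submission
  imports Defs
begin

(* Retractions compose: if A_Y retracts onto A_(Y - y) and A_(Y - y) retracts onto A_X, then
   A_Y retracts onto A_X.  Since S is finite, every X \<subseteq> S is reached from S by removing
   one generator at a time, and composing the one-step retractions along such a chain gives a
   retraction of A_S onto A_X.  Conversely a retraction of A_S onto A_(X - x) restricts to a
   retraction of A_X onto A_(X - x).  The only other ingredient is that the words modulo the
   Artin relations form a group generated by S, so that A_S is the whole group. *)

abbreviation artin_class :: "('a \<Rightarrow> 'a \<Rightarrow> enat) \<Rightarrow> 'a set \<Rightarrow> 'a aword \<Rightarrow> 'a aword set" where
  "artin_class M S w \<equiv> artin_rel M S `` {w}"

lemma words_over_append [simp]:
  "u @ v \<in> words_over S \<longleftrightarrow> u \<in> words_over S \<and> v \<in> words_over S"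
  by (auto simp: words_over_def)

lemma words_over_Cons [simp]: "x # v \<in> words_over S \<longleftrightarrow> fst x \<in> S \<and> v \<in> words_over S"
  by (auto simp: words_over_def)

lemma words_over_Nil [simp]: "[] \<in> words_over S"
  by (auto simp: words_over_def)

lemma alt_word_in_words_over: "s \<in> S \<Longrightarrow> t \<in> S \<Longrightarrow> alt_word s t m \<in> words_over S"
  by (induction m arbitrary: s t) auto

lemma artin_eq_imp_words_over:
  "artin_eq M S u v \<Longrightarrow> u \<in> words_over S \<and> v \<in> words_over S"
  by (induction rule: artin_eq.induct) (auto simp: alt_word_in_words_over)

lemma equiv_artin_rel: "equiv (words_over S) (artin_rel M S)"
  unfolding equiv_def refl_on_def sym_def trans_def artin_rel_def
  using artin_eq_imp_words_over[of M S] by (auto intro: artin_eq.intros)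

lemma artin_eq_in_context:
  assumes "artin_eq M S u v" "p \<in> words_over S" "q \<in> words_over S"
  shows "artin_eq M S (p @ u @ q) (p @ v @ q)"
  using assms
proof (induction rule: artin_eq.induct)
  case (cancel u v s b)
  then show ?case using artin_eq.cancel[of "p @ u" S "v @ q" s M b] by simp
next
  case (braid u v s t m)
  then show ?case using artin_eq.braid[of "p @ u" S "v @ q" s t M m] by simp
qed (auto intro: artin_eq.intros)

lemma artin_eq_append:
  assumes "artin_eq M S u u'" "artin_eq M S v v'"
  shows "artin_eq M S (u @ v) (u' @ v')"
proof -
  have "artin_eq M S ([] @ u @ v) ([] @ u' @ v)"
    using assms by (intro artin_eq_in_context) (auto dest: artin_eq_imp_words_over)
  moreover have "artin_eq M S (u' @ v @ []) (u' @ v' @ [])"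
    using assms by (intro artin_eq_in_context) (auto dest: artin_eq_imp_words_over)
  ultimately show ?thesis by (auto intro: artin_eq.trans)
qed

lemma artin_class_eq_iff:
  "u \<in> words_over S \<Longrightarrow> v \<in> words_over S \<Longrightarrow>
     artin_class M S u = artin_class M S v \<longleftrightarrow> artin_eq M S u v"
  using eq_equiv_class_iff[OF equiv_artin_rel] by (simp add: artin_rel_def)

lemma artin_eq_some_in_class:
  assumes "w \<in> words_over S"
  shows "artin_eq M S w (SOME w'. w' \<in> artin_class M S w)"
proof -
  have "w \<in> artin_class M S w" using assms by (simp add: artin_rel_def artin_eq.refl)
  then have "(SOME w'. w' \<in> artin_class M S w) \<in> artin_class M S w" by (rule someI)
  then show ?thesis by (simp add: artin_rel_def)
qed

lemma artin_mult_class: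
  assumes "u \<in> words_over S" "v \<in> words_over S"
  shows "artin_class M S u \<otimes>\<^bsub>artin_group M S\<^esub> artin_class M S v = artin_class M S (u @ v)"
proof -
  define w where "w = (SOME u'. u' \<in> artin_class M S u) @ (SOME v'. v' \<in> artin_class M S v)"
  have "artin_eq M S (u @ v) w"
    unfolding w_def using assms by (intro artin_eq_append artin_eq_some_in_class)
  then have "artin_class M S w = artin_class M S (u @ v)"
    using assms artin_eq_imp_words_over artin_class_eq_iff by (metis artin_eq.sym)
  then show ?thesis unfolding artin_group_def w_def by simp
qed

lemma carrier_artin_group: "carrier (artin_group M S) = artin_class M S ` words_over S"
  by (auto simp: artin_group_def quotient_def)

lemma one_artin_group: "\<one>\<^bsub>artin_group M S\<^esub> = artin_class M S []"
  by (simp add: artin_group_def)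

definition word_inv :: "'a aword \<Rightarrow> 'a aword" where
  "word_inv w = rev (map (\<lambda>(s, b). (s, \<not> b)) w)"

lemma word_inv_in_words_over: "w \<in> words_over S \<Longrightarrow> word_inv w \<in> words_over S"
  by (auto simp: word_inv_def words_over_def)

lemma artin_eq_word_inv_append: "w \<in> words_over S \<Longrightarrow> artin_eq M S (word_inv w @ w) []"
proof (induction w)
  case Nil
  then show ?case by (simp add: word_inv_def artin_eq.refl)
next
  case (Cons x w)
  obtain s b where x: "x = (s, b)" by force
  have "word_inv (x # w) @ x # w = word_inv w @ [(s, \<not> b), (s, \<not> \<not> b)] @ w"
    by (simp add: word_inv_def x)
  moreover have "artin_eq M S (word_inv w @ [(s, \<not> b), (s, \<not> \<not> b)] @ w) (word_inv w @ w)"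
    using Cons x by (intro artin_eq.cancel) (auto simp: word_inv_in_words_over)
  ultimately show ?case using Cons by (metis artin_eq.trans words_over_Cons)
qed

lemma group_artin_group: "group (artin_group M S)"
proof (rule groupI)
  fix x y z
  assume "x \<in> carrier (artin_group M S)" "y \<in> carrier (artin_group M S)"
    "z \<in> carrier (artin_group M S)"
  then show "x \<otimes>\<^bsub>artin_group M S\<^esub> y \<otimes>\<^bsub>artin_group M S\<^esub> z =
      x \<otimes>\<^bsub>artin_group M S\<^esub> (y \<otimes>\<^bsub>artin_group M S\<^esub> z)"
    by (auto simp: carrier_artin_group artin_mult_class)
next
  fix x assume "x \<in> carrier (artin_group M S)"
  then obtain w where w: "w \<in> words_over S" "x = artin_class M S w"
    by (auto simp: carrier_artin_group)
  then show "\<one>\<^bsub>artin_group M S\<^esub> \<otimes>\<^bsub>artin_group M S\<^esub> x = x"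
    by (simp add: one_artin_group artin_mult_class)
  have "artin_class M S (word_inv w) \<otimes>\<^bsub>artin_group M S\<^esub> x = \<one>\<^bsub>artin_group M S\<^esub>"
    using w word_inv_in_words_over[OF w(1)]
    by (simp add: one_artin_group artin_mult_class artin_class_eq_iff artin_eq_word_inv_append)
  then show "\<exists>y\<in>carrier (artin_group M S). y \<otimes>\<^bsub>artin_group M S\<^esub> x = \<one>\<^bsub>artin_group M S\<^esub>"
    using w word_inv_in_words_over by (auto simp: carrier_artin_group)
qed (auto simp: carrier_artin_group one_artin_group artin_mult_class)

lemma inv_artin_class:
  assumes "w \<in> words_over S"
  shows "inv\<^bsub>artin_group M S\<^esub> artin_class M S w = artin_class M S (word_inv w)"
proof -
  interpret group "artin_group M S" by (rule group_artin_group)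
  show ?thesis
    using assms word_inv_in_words_over[OF assms]
    by (intro inv_equality)
      (auto simp: carrier_artin_group one_artin_group artin_mult_class artin_class_eq_iff
        artin_eq_word_inv_append)
qed

lemma mono_artin_parabolic: "mono (artin_parabolic M S)"
  unfolding artin_parabolic_def
  by (intro monoI group.mono_generate[OF group_artin_group] image_mono)

lemma artin_parabolic_self: "artin_parabolic M S S = carrier (artin_group M S)"
proof
  interpret group "artin_group M S" by (rule group_artin_group)
  show "artin_parabolic M S S \<subseteq> carrier (artin_group M S)"
    unfolding artin_parabolic_def
    by (rule generate_incl) (auto simp: artin_gen_def carrier_artin_group)
  have letter: "artin_class M S [x] \<in> artin_parabolic M S S" if "fst x \<in> S" for x
  proof -
    obtain s b where x: "x = (s, b)" by force
    have gen: "artin_gen M S s \<in> artin_gen M S ` S" using that x by simp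
    show ?thesis
    proof (cases b)
      case False
      have "artin_class M S [(s, False)] = inv\<^bsub>artin_group M S\<^esub> artin_gen M S s"
        using that x by (simp add: inv_artin_class word_inv_def artin_gen_def)
      then show ?thesis
        using generate.inv[OF gen] False x by (simp add: artin_parabolic_def)
    qed (use generate.incl[OF gen] x in \<open>simp add: artin_parabolic_def artin_gen_def\<close>)
  qed
  have "artin_class M S w \<in> artin_parabolic M S S" if "w \<in> words_over S" for w
    using that
  proof (induction w)
    case Nil
    then show ?case
      using generate.one by (simp add: artin_parabolic_def one_artin_group[symmetric])
  next
    case (Cons x w)
    then have "artin_class M S (x # w) =
        artin_class M S [x] \<otimes>\<^bsub>artin_group M S\<^esub> artin_class M S w"
      by (simp add: artin_mult_class)
    then show ?case
      using Cons letter by (simp add: artin_parabolic_def generate.eng)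
  qed
  then show "carrier (artin_group M S) \<subseteq> artin_parabolic M S S"
    by (auto simp: carrier_artin_group)
qed

lemma retraction_id: "retraction (G\<lparr>carrier := H\<rparr>) H id"
  by (simp add: retraction_def hom_def)

lemma retraction_restrict:
  assumes "retraction G H \<phi>" "K \<subseteq> carrier G"
  shows "retraction (G\<lparr>carrier := K\<rparr>) H \<phi>"
  using assms unfolding retraction_def hom_def by (simp add: Pi_iff subset_iff)

lemma retraction_comp:
  assumes "retraction G J \<rho>" "retraction (G\<lparr>carrier := J\<rparr>) H \<psi>" "H \<subseteq> J"
  shows "retraction G H (\<psi> \<circ> \<rho>)"
  using assms by (auto simp: retraction_def hom_def Pi_iff subset_iff)

lemma retraction_chain:
  fixes A :: "'b set \<Rightarrow> 'a set" and G :: "('a, 'c) monoid_scheme"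
  assumes "finite Y" "X \<subseteq> Y" "mono A"
    and step: "\<And>Z z. Z \<subseteq> Y \<Longrightarrow> z \<in> Z \<Longrightarrow>
      \<exists>\<rho>. retraction (G\<lparr>carrier := A Z\<rparr>) (A (Z - {z})) \<rho>"
  shows "\<exists>\<phi>. retraction (G\<lparr>carrier := A Y\<rparr>) (A X) \<phi>"
proof -
  have "\<exists>\<phi>. retraction (G\<lparr>carrier := A (X \<union> D)\<rparr>) (A X) \<phi>" if "finite D" "D \<subseteq> Y - X" for D
    using that
  proof (induction rule: finite_subset_induct')
    case empty
    show ?case using retraction_id by auto
  next
    case (insert d D)
    then obtain \<phi> where \<phi>: "retraction (G\<lparr>carrier := A (X \<union> D)\<rparr>) (A X) \<phi>" by blast
    have "X \<union> insert d D - {d} = X \<union> D" using insert by auto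
    then obtain \<rho> where "retraction (G\<lparr>carrier := A (X \<union> insert d D)\<rparr>) (A (X \<union> D)) \<rho>"
      using step[of "X \<union> insert d D" d] insert assms(2) by auto
    then have "retraction (G\<lparr>carrier := A (X \<union> insert d D)\<rparr>) (A X) (\<phi> \<circ> \<rho>)"
      using \<phi> \<open>mono A\<close> by (intro retraction_comp) (auto dest: monoD)
    then show ?case by blast
  qed
  from this[of "Y - X"] show ?thesis using assms(1,2) by (simp add: Un_absorb1)
qed

theorem lemma3p1:
  fixes M :: "'a \<Rightarrow> 'a \<Rightarrow> enat" and S :: "'a set"
  assumes "finite S" and "coxeter_matrix M S"
  shows "parabolic_retractable M S \<longleftrightarrow>
    (\<forall>X\<subseteq>S. \<forall>x\<in>X. \<exists>\<phi>.
       retraction ((artin_group M S)\<lparr>carrier := artin_parabolic M S X\<rparr>)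
                  (artin_parabolic M S (X - {x})) \<phi>)"
proof
  assume "parabolic_retractable M S"
  show "\<forall>X\<subseteq>S. \<forall>x\<in>X. \<exists>\<phi>. retraction ((artin_group M S)\<lparr>carrier := artin_parabolic M S X\<rparr>)
    (artin_parabolic M S (X - {x})) \<phi>"
  proof (intro allI impI ballI)
    fix X x assume "X \<subseteq> S" "x \<in> X"
    then have "X - {x} \<subseteq> S" by blast
    then obtain \<phi> where "retraction (artin_group M S) (artin_parabolic M S (X - {x})) \<phi>"
      using \<open>parabolic_retractable M S\<close> by (auto simp: parabolic_retractable_def)
    moreover have "artin_parabolic M S X \<subseteq> carrier (artin_group M S)"
      using monoD[OF mono_artin_parabolic \<open>X \<subseteq> S\<close>, of M S] by (simp add: artin_parabolic_self)
    ultimately show "\<exists>\<phi>. retraction ((artin_group M S)\<lparr>carrier := artin_parabolic M S X\<rparr>)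
      (artin_parabolic M S (X - {x})) \<phi>"
      by (blast intro: retraction_restrict)
  qed
next
  assume one_step: "\<forall>X\<subseteq>S. \<forall>x\<in>X. \<exists>\<phi>.
    retraction ((artin_group M S)\<lparr>carrier := artin_parabolic M S X\<rparr>)
      (artin_parabolic M S (X - {x})) \<phi>"
  have "\<exists>\<phi>. retraction (artin_group M S) (artin_parabolic M S X) \<phi>" if "X \<subseteq> S" for X
    using retraction_chain[OF \<open>finite S\<close> that mono_artin_parabolic[of M S],
        where G = "artin_group M S"] one_step
    by (simp add: artin_parabolic_self)
  then show "parabolic_retractable M S" by (simp add: parabolic_retractable_def)
qed

end
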